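(* For any $n\in\mathbb{N}$, the monoid $\mathrm{lps}_n$ is finitely presented.
   Context: Let $\mathcal{A}_n=\{1<2<\cdots<n\}$. An lPS tableau is a finite (possibly empty) sequence of nonempty bottom-justified columns of boxes filled with positive integers, such that the entries of each column are strictly decreasing from top to bottom and the bottom entries of the columns form a weakly increasing sequence from left to right. Right insertion of a symbol $a$ into an lPS tableau $B$: if $a$ is greater than or equal to every entry of the bottom row, append a new column consisting of $a$ at the right end; otherwise, let $z$ be the leftmost bottom-row entry with $z>a$ and put $a$ in a new box at the bottom of the column of $z$ (the previous entries of that column move up one box). For $w=w_1\cdots w_k$, $\mathfrak{R}_\ell(w)$ is obtained by starting with the empty tableau and right-inserting $w_1,\dots,w_k$ in order. The monoid $\mathrm{lps}_n$ is the quotient of the free monoid $\mathcal{A}_n^*$ by the congruence $u\equiv v\iff\mathfrak{R}_\ell(u)=\mathfrak{R}_\ell(v)$. *)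

theory Defs
  imports Main
begin

text \<open>An lPS tableau is a list of columns (left to right); each column is a list of
entries from top to bottom, so the bottom entry of a column c is last c.\<close>

fun rins :: "nat list list \<Rightarrow> nat \<Rightarrow> nat list list" where
  "rins [] a = [[a]]"
| "rins (c # cs) a = (if a < last c then (c @ [a]) # cs else c # rins cs a)"

definition lps_tab :: "nat list \<Rightarrow> nat list list" where
  "lps_tab w = foldl rins [] w"

definition lps_equiv :: "nat \<Rightarrow> nat list \<Rightarrow> nat list \<Rightarrow> bool" where
  "lps_equiv n u v \<longleftrightarrow> set u \<subseteq> {1..n} \<and> set v \<subseteq> {1..n} \<and> lps_tab u = lps_tab v"

inductive_set cong_gen :: "('a list \<times> 'a list) set \<Rightarrow> ('a list \<times> 'a list) set"
  for R where
  refl: "(u, u) \<in> cong_gen R"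
| rel: "(u, v) \<in> R \<Longrightarrow> (p @ u @ s, p @ v @ s) \<in> cong_gen R"
| sym: "(u, v) \<in> cong_gen R \<Longrightarrow> (v, u) \<in> cong_gen R"
| trans: "(u, v) \<in> cong_gen R \<Longrightarrow> (v, w) \<in> cong_gen R \<Longrightarrow> (u, w) \<in> cong_gen R"

text \<open>The monoid A*/E (A a set of letters, E an equivalence on words over A that is a
congruence) is finitely presented: there are a finite alphabet B, a finite set of
relations R over B, and an isomorphism B*/R# \<cong> A*/E. The isomorphism is given by the
monoid homomorphism B* \<rightarrow> A*/E sending a letter b to the class of the word g b;
it is required to be surjective with kernel exactly R#.\<close>
definition fin_presented_quot :: "'a set \<Rightarrow> ('a list \<Rightarrow> 'a list \<Rightarrow> bool) \<Rightarrow> bool" where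
  "fin_presented_quot A E \<longleftrightarrow>
     (\<exists>(B :: nat set) (g :: nat \<Rightarrow> 'a list) (R :: (nat list \<times> nat list) set).
        finite B \<and> finite R \<and> R \<subseteq> lists B \<times> lists B \<and>
        (\<forall>b\<in>B. g b \<in> lists A) \<and>
        (\<forall>u\<in>lists B. \<forall>v\<in>lists B.
            (u, v) \<in> cong_gen R \<longleftrightarrow> E (concat (map g u)) (concat (map g v))) \<and>
        (\<forall>w\<in>lists A. \<exists>u\<in>lists B. E w (concat (map g u))))"

end

theory Submission
  imports Defs
begin

text \<open>The relations are \<open>y c a = y a c\<close> for letters \<open>a < y\<close> and a word \<open>c\<close> of letters
  \<open>\<ge> y\<close> of length at most \<open>n\<close>. They hold in \<open>lps\<^sub>n\<close>: once \<open>y\<close> has been inserted it is a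
  bottom entry, everything inserted afterwards from \<open>c\<close> lands strictly to its right and
  \<open>a\<close> lands weakly to its left, so the two insertions do not interact. Conversely they
  suffice to rewrite every word to the column reading of its tableau: inserting a letter
  \<open>a\<close> into a tableau amounts to moving \<open>a\<close> leftwards past whole columns, and a column
  is always preceded in the reading by a letter not exceeding its entries. Columns are
  strictly decreasing and so have at most \<open>n\<close> entries; hence the relations with
  \<open>|c| \<le> n\<close> already suffice, and there are finitely many of them.\<close>

definition lps_relations :: "nat \<Rightarrow> (nat list \<times> nat list) set" where
  "lps_relations n =
     {(y # c @ [a], y # a # c) | y c a.
        1 \<le> a \<and> a < y \<and> y \<le> n \<and> set c \<subseteq> {y..n} \<and> length c \<le> n}"

definition lps_tableau :: "nat \<Rightarrow> nat list list \<Rightarrow> bool" where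
  "lps_tableau n T \<longleftrightarrow>
     (\<forall>c\<in>set T. c \<noteq> [] \<and> sorted_wrt (>) c \<and> set c \<subseteq> {1..n}) \<and> sorted (map last T)"

lemma cong_gen_append:
  "(u, v) \<in> cong_gen R \<Longrightarrow> (p @ u @ s, p @ v @ s) \<in> cong_gen R"
proof (induction rule: cong_gen.induct)
  case (rel u v p' s')
  then show ?case using cong_gen.rel[of u v R "p @ p'" "s' @ s"] by simp
qed (auto intro: cong_gen.intros)

lemma cong_gen_append_right: "(u, v) \<in> cong_gen R \<Longrightarrow> (u @ s, v @ s) \<in> cong_gen R"
  using cong_gen_append[of u v R "[]" s] by simp

lemma cong_gen_append_left: "(u, v) \<in> cong_gen R \<Longrightarrow> (p @ u, p @ v) \<in> cong_gen R"
  using cong_gen_append[of u v R p "[]"] by simp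

lemma cong_gen_imp_eq:
  assumes "\<And>u v p s. (u, v) \<in> R \<Longrightarrow> f (p @ u @ s) = f (p @ v @ s)"
    and "(u, v) \<in> cong_gen R"
  shows "f u = f v"
  using assms(2) by induction (auto simp: assms(1))

lemma lps_tab_append: "lps_tab (u @ s) = foldl rins (lps_tab u) s"
  by (simp add: lps_tab_def)

lemma lps_tab_snoc: "lps_tab (u @ [a]) = rins (lps_tab u) a"
  by (simp add: lps_tab_def)

lemma set_bottoms_rins: "set (map last (rins T a)) \<subseteq> insert a (set (map last T))"
  by (induction T a rule: rins.induct) auto

lemma rins_split:
  "\<exists>M S. rins T y = M @ S \<and> M \<noteq> [] \<and> last (last M) = y \<and> (\<forall>d\<in>set M. last d \<le> y)"
proof (induction T y rule: rins.induct)
  case (1 a)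
  show ?case by (rule exI[of _ "[[a]]"]) simp
next
  case (2 c cs a)
  show ?case
  proof (cases "a < last c")
    case True
    then show ?thesis by (intro exI[of _ "[c @ [a]]"] exI[of _ cs]) auto
  next
    case False
    with "2.IH" obtain M S where "rins cs a = M @ S" "M \<noteq> []" "last (last M) = a"
      "\<forall>d\<in>set M. last d \<le> a" by blast
    with False show ?thesis by (intro exI[of _ "c # M"] exI[of _ S]) auto
  qed
qed

lemma rins_append_skip:
  "\<forall>d\<in>set M. last d \<le> a \<Longrightarrow> rins (M @ S) a = M @ rins S a"
  by (induction M) auto

lemma rins_append_hit:
  "\<exists>d\<in>set M. a < last d \<Longrightarrow> rins (M @ S) a = rins M a @ S"
  by (induction M) auto

lemma foldl_rins_append_skip:
  "\<forall>d\<in>set M. last d \<le> y \<Longrightarrow> \<forall>c\<in>set w. y \<le> c \<Longrightarrow>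
   foldl rins (M @ S) w = M @ foldl rins S w"
proof (induction w arbitrary: S)
  case (Cons c w)
  then have "rins (M @ S) c = M @ rins S c"
    by (intro rins_append_skip) (auto intro: order_trans)
  with Cons show ?case by simp
qed simp

lemma lps_tab_commute_past_block:
  assumes "a < y" "\<forall>c\<in>set w. y \<le> c"
  shows "lps_tab (p @ y # w @ [a]) = lps_tab (p @ y # a # w)"
proof -
  obtain M S where split: "rins (lps_tab p) y = M @ S" "M \<noteq> []" "last (last M) = y"
    and small: "\<forall>d\<in>set M. last d \<le> y"
    using rins_split by blast
  have hit: "\<exists>d\<in>set M. a < last d"
    using split(2,3) assms(1) by (intro bexI[of _ "last M"]) auto
  have small': "\<forall>d\<in>set (rins M a). last d \<le> y"
    using set_bottoms_rins[of M a] small assms(1) by fastforce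
  have "lps_tab (p @ y # w @ [a]) = rins (foldl rins (M @ S) w) a"
    using split(1) by (simp add: lps_tab_def)
  also have "\<dots> = rins M a @ foldl rins S w"
    using foldl_rins_append_skip[OF small assms(2)] rins_append_hit[OF hit] by simp
  also have "\<dots> = foldl rins (rins (M @ S) a) w"
    using rins_append_hit[OF hit] foldl_rins_append_skip[OF small' assms(2)] by simp
  also have "\<dots> = lps_tab (p @ y # a # w)"
    using split(1) by (simp add: lps_tab_def)
  finally show ?thesis .
qed

lemma lps_tab_eq_if_cong:
  assumes "(u, v) \<in> cong_gen (lps_relations n)"
  shows "lps_tab u = lps_tab v"
proof (rule cong_gen_imp_eq[OF _ assms])
  fix u v p s
  assume "(u, v) \<in> lps_relations n"
  then obtain y c a where "u = y # c @ [a]" "v = y # a # c" "a < y" "\<forall>x\<in>set c. y \<le> x"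
    unfolding lps_relations_def by fastforce
  then have "lps_tab (p @ u) = lps_tab (p @ v)"
    using lps_tab_commute_past_block[of a y c p] by simp
  then show "lps_tab (p @ u @ s) = lps_tab (p @ v @ s)"
    by (metis append_assoc lps_tab_append)
qed

lemma sorted_wrt_greater_last_le:
  assumes "sorted_wrt (>) (c :: 'a :: linorder list)" "x \<in> set c"
  shows "last c \<le> x"
  using assms by (cases c rule: rev_cases) (auto simp: sorted_wrt_append)

lemma rins_lps_tableau:
  "lps_tableau n T \<Longrightarrow> a \<in> {1..n} \<Longrightarrow> lps_tableau n (rins T a)"
proof (induction T a rule: rins.induct)
  case (1 a)
  then show ?case by (simp add: lps_tableau_def)
next
  case (2 c cs a)
  then have c: "c \<noteq> []" "sorted_wrt (>) c" "set c \<subseteq> {1..n}"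
    and sorted: "sorted (last c # map last cs)" and cs: "lps_tableau n cs"
    by (simp_all add: lps_tableau_def)
  show ?case
  proof (cases "a < last c")
    case True
    then have "\<forall>x\<in>set c. a < x"
      using sorted_wrt_greater_last_le[OF c(2)] by (auto intro: less_le_trans)
    then have "sorted_wrt (>) (c @ [a])" using c(2) by (simp add: sorted_wrt_append)
    moreover have "sorted (a # map last cs)" using True sorted by auto
    ultimately show ?thesis using True c(3) 2(2,3) by (simp add: lps_tableau_def)
  next
    case False
    have tab: "lps_tableau n (rins cs a)" using "2.IH"[OF False cs 2(3)] .
    have "\<forall>z\<in>set (map last (rins cs a)). last c \<le> z"
      using set_bottoms_rins[of cs a] sorted False by fastforce
    with tab c False show ?thesis by (simp add: lps_tableau_def)
  qed
qed

lemma lps_tab_lps_tableau: "set w \<subseteq> {1..n} \<Longrightarrow> lps_tableau n (lps_tab w)"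
proof (induction w rule: rev_induct)
  case Nil
  show ?case by (simp add: lps_tab_def lps_tableau_def)
next
  case (snoc a w)
  then show ?case by (simp add: lps_tab_snoc rins_lps_tableau)
qed

lemma length_le_if_sorted_wrt_greater:
  assumes "sorted_wrt (>) (c :: nat list)" "set c \<subseteq> {1..n}"
  shows "length c \<le> n"
proof -
  have "distinct c" using assms(1) by (induction c) auto
  then have "length c = card (set c)" by (simp add: distinct_card)
  also have "\<dots> \<le> card {1..n}" using assms(2) by (intro card_mono) auto
  finally show ?thesis by simp
qed

lemma cong_move_past_columns:
  assumes "lps_tableau n cs" "sorted (y # map last cs)" "1 \<le> a" "a < y"
  shows "(y # concat cs @ [a], y # a # concat cs) \<in> cong_gen (lps_relations n)"
  using assms
proof (induction cs arbitrary: y)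
  case Nil
  show ?case by (simp add: cong_gen.refl)
next
  case (Cons c ds)
  have c: "c \<noteq> []" "sorted_wrt (>) c" "set c \<subseteq> {1..n}" and ds: "lps_tableau n ds"
    using Cons.prems(1) by (simp_all add: lps_tableau_def)
  obtain c' x where c': "c = c' @ [x]" using c(1) by (cases c rule: rev_cases) auto
  have "y \<le> x" using Cons.prems(2) c' by simp
  have "x \<le> n" using c(3) c' by simp
  have "set c \<subseteq> {y..n}"
    using sorted_wrt_greater_last_le[OF c(2)] c(3) c' \<open>y \<le> x\<close> by fastforce
  then have rel: "(y # c @ [a], y # a # c) \<in> lps_relations n"
    unfolding lps_relations_def using Cons.prems(3,4) \<open>y \<le> x\<close> \<open>x \<le> n\<close>
      length_le_if_sorted_wrt_greater[OF c(2,3)] by auto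
  have "(x # concat ds @ [a], x # a # concat ds) \<in> cong_gen (lps_relations n)"
    using Cons.prems \<open>y \<le> x\<close> c' ds by (intro Cons.IH) auto
  from cong_gen_append_left[OF this, of "y # c'"]
  have "(y # concat (c # ds) @ [a], y # c @ a # concat ds) \<in> cong_gen (lps_relations n)"
    using c' by simp
  moreover have "(y # c @ a # concat ds, y # a # concat (c # ds)) \<in> cong_gen (lps_relations n)"
    using cong_gen.rel[OF rel, of "[]" "concat ds"] by simp
  ultimately show ?case by (rule cong_gen.trans)
qed

lemma cong_rins:
  "lps_tableau n T \<Longrightarrow> a \<in> {1..n} \<Longrightarrow>
   (concat T @ [a], concat (rins T a)) \<in> cong_gen (lps_relations n)"
proof (induction T a rule: rins.induct)
  case (1 a)
  show ?case by (simp add: cong_gen.refl)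
next
  case (2 c cs a)
  then have cs: "lps_tableau n cs" and "c \<noteq> []" by (simp_all add: lps_tableau_def)
  show ?case
  proof (cases "a < last c")
    case True
    obtain c' x where c': "c = c' @ [x]" using \<open>c \<noteq> []\<close> by (cases c rule: rev_cases) auto
    have "(x # concat cs @ [a], x # a # concat cs) \<in> cong_gen (lps_relations n)"
      using 2(2,3) True c' cs by (intro cong_move_past_columns) (auto simp: lps_tableau_def)
    from cong_gen_append_left[OF this, of c'] c' True show ?thesis by simp
  next
    case False
    from cong_gen_append_left[OF "2.IH"[OF False cs 2(3)], of c] False show ?thesis
      by simp
  qed
qed

lemma cong_lps_tab_reading:
  "set w \<subseteq> {1..n} \<Longrightarrow> (w, concat (lps_tab w)) \<in> cong_gen (lps_relations n)"
proof (induction w rule: rev_induct)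
  case Nil
  show ?case by (simp add: lps_tab_def cong_gen.refl)
next
  case (snoc a w)
  then have "(w @ [a], concat (lps_tab w) @ [a]) \<in> cong_gen (lps_relations n)"
    by (intro cong_gen_append_right) simp
  moreover have "(concat (lps_tab w) @ [a], concat (lps_tab (w @ [a]))) \<in> cong_gen (lps_relations n)"
    using cong_rins[OF lps_tab_lps_tableau] snoc.prems by (simp add: lps_tab_snoc)
  ultimately show ?case by (rule cong_gen.trans)
qed

lemma cong_lps_relations_iff:
  assumes "set u \<subseteq> {1..n}" "set v \<subseteq> {1..n}"
  shows "(u, v) \<in> cong_gen (lps_relations n) \<longleftrightarrow> lps_tab u = lps_tab v"
  using lps_tab_eq_if_cong cong_lps_tab_reading[OF assms(1)]
    cong_gen.sym[OF cong_lps_tab_reading[OF assms(2)]] cong_gen.trans by metis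

lemma lps_relations_subset:
  "lps_relations n \<subseteq> {w. set w \<subseteq> {1..n} \<and> length w \<le> n + 2} \<times> {w. set w \<subseteq> {1..n} \<and> length w \<le> n + 2}"
  unfolding lps_relations_def by fastforce

lemma finite_lps_relations: "finite (lps_relations n)"
  using lps_relations_subset by (rule finite_subset) (simp add: finite_lists_length_le)

theorem proposition3p24:
  fixes n :: nat
  shows "fin_presented_quot {1..n} (lps_equiv n)"
  unfolding fin_presented_quot_def
proof (intro exI[of _ "{1..n}"] exI[of _ "\<lambda>b. [b]"] exI[of _ "lps_relations n"] conjI ballI)
  show "lps_relations n \<subseteq> lists {1..n} \<times> lists {1..n}"
    using lps_relations_subset by (auto simp: lists_eq_set)
  show "\<exists>u\<in>lists {1..n}. lps_equiv n w (concat (map (\<lambda>b. [b]) u))" if "w \<in> lists {1..n}" for w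
    using that by (auto simp: lps_equiv_def lists_eq_set)
  show "(u, v) \<in> cong_gen (lps_relations n) \<longleftrightarrow>
        lps_equiv n (concat (map (\<lambda>b. [b]) u)) (concat (map (\<lambda>b. [b]) v))"
    if "u \<in> lists {1..n}" "v \<in> lists {1..n}" for u v
    using that cong_lps_relations_iff by (simp add: lps_equiv_def lists_eq_set)
qed (simp_all add: finite_lps_relations)

end
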